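(* Let $(\Omega,\mathcal{A},\pi)$ and $(\Omega',\mathcal{A}',\pi')$ be probability spaces, let $W:\Omega\times\Omega'\to\mathcal{Z}$ be weak-* measurable with respect to $\mathcal{A}\times\mathcal{A}'$ with $\|W\|\in L^2(\pi\times\pi')$, and let $\mathcal{A}_0\subset\mathcal{A}$ be a sub-$\sigma$-algebra. If $W(\cdot,y)$ is weak-* measurable with respect to $\mathcal{A}_0$ for almost all $y\in\Omega'$, then $W$ is almost weak-* measurable with respect to $\mathcal{A}_0\times\mathcal{A}'$.
   Context: $\Phi$ is a separable real Banach space, $\mathcal{Z}=\Phi^*$, $\langle\varphi,z\rangle=z(\varphi)$. A function is weak-* measurable w.r.t. a $\sigma$-algebra $\mathcal{B}$ if every $\langle\varphi,\cdot\rangle$, $\varphi\in\Phi$, composed with it is $\mathcal{B}$-measurable. For a sub-$\sigma$-algebra $\mathcal{B}'$ of $\mathcal{A}\times\mathcal{A}'$, the conditional expectation $E(W\mid\mathcal{B}')$ is the ($\pi\times\pi'$-a.e. unique) $\mathcal{B}'$-weak-* measurable function $W'$ with $\int_B\langle\varphi,W'\rangle=\int_B\langle\varphi,W\rangle$ for all $B\in\mathcal{B}'$, $\varphi\in\Phi$; $W$ is almost weak-* measurable with respect to $\mathcal{B}'$ if $W=E(W\mid\mathcal{B}')$ almost everywhere. *)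

theory Defs
  imports "HOL-Probability.Probability"
begin

text \<open>Z = dual of the separable Banach space 'phi, represented as bounded linear
functionals of type blinfun (with the operator norm). The pairing
<phi, z> is z(phi) = blinfun_apply z phi.\<close>

definition weak_star_measurable ::
  "'x measure \<Rightarrow> ('x \<Rightarrow> ('phi::real_normed_vector \<Rightarrow>\<^sub>L real)) \<Rightarrow> bool" where
  "weak_star_measurable N W \<longleftrightarrow>
     (\<forall>\<phi>. (\<lambda>x. blinfun_apply (W x) \<phi>) \<in> borel_measurable N)"

definition is_weak_star_cond_exp ::
  "'x measure \<Rightarrow> 'x measure \<Rightarrow> ('x \<Rightarrow> ('phi::real_normed_vector \<Rightarrow>\<^sub>L real))
     \<Rightarrow> ('x \<Rightarrow> ('phi \<Rightarrow>\<^sub>L real)) \<Rightarrow> bool" where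
  "is_weak_star_cond_exp N F W W' \<longleftrightarrow>
     weak_star_measurable F W' \<and>
     (\<forall>B\<in>sets F. \<forall>\<phi>.
        set_integrable N B (\<lambda>x. blinfun_apply (W' x) \<phi>) \<and>
        set_integrable N B (\<lambda>x. blinfun_apply (W x) \<phi>) \<and>
        (LINT x:B|N. blinfun_apply (W' x) \<phi>) = (LINT x:B|N. blinfun_apply (W x) \<phi>))"

definition almost_weak_star_measurable ::
  "'x measure \<Rightarrow> 'x measure \<Rightarrow> ('x \<Rightarrow> ('phi::real_normed_vector \<Rightarrow>\<^sub>L real)) \<Rightarrow> bool" where
  "almost_weak_star_measurable N F W \<longleftrightarrow>
     (\<exists>W'. is_weak_star_cond_exp N F W W' \<and> (AE x in N. W x = W' x))"

end

theory Submission
  imports Defs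
begin

text \<open>Let \<open>f\<close> be real with a.e. \<open>M0\<close>-measurable sections \<open>f(\<cdot>, y)\<close> and let \<open>g\<close> be its conditional
  expectation given \<open>M0 \<Otimes> M'\<close>. On a rectangle \<open>A \<times> B\<close>, Fubini and the \<open>M0\<close>-measurability of the
  sections allow replacing the indicator of \<open>A\<close> by \<open>P(A | M0)\<close>, so the integral of \<open>f\<close> over
  \<open>A \<times> B\<close> equals that of \<open>k f\<close> for the \<open>M0 \<Otimes> M'\<close>-measurable weight \<open>k(x, y) = P(A | M0)(x) 1\<^sub>B(y)\<close>.
  Hence it equals the integral of \<open>k g\<close>, and since the sections of \<open>g\<close> are \<open>M0\<close>-measurable too, that
  is the integral of \<open>g\<close> over \<open>A \<times> B\<close>. Rectangles generate the product \<open>\<sigma>\<close>-algebra, so \<open>f = g\<close> a.e.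

  For \<open>W\<close> this applies to every \<open>\<langle>\<phi>, W\<rangle>\<close>. On a countable dense \<open>\<rat>\<close>-subspace of \<open>\<Phi>\<close> the
  resulting conditional expectations are a.e. the restriction of a bounded functional; choosing that
  functional wherever it exists gives a weak-* measurable version of \<open>W\<close>.\<close>

lemma subalgebra_pair_measure:
  assumes "subalgebra M M0"
  shows "subalgebra (M \<Otimes>\<^sub>M M') (M0 \<Otimes>\<^sub>M M')"
proof -
  have "space M0 = space M" and "sets M0 \<subseteq> sets M" using assms unfolding subalgebra_def by auto
  then show ?thesis
    unfolding subalgebra_def sets_pair_measure space_pair_measure
    by (auto intro!: sigma_sets_subseteq)
qed

lemma AE_eq_if_set_integral_eq_on_generator:
  fixes f g :: "'a \<Rightarrow> real"
  assumes sets_N: "sets N = sigma_sets (space N) G" and G: "Int_stable G" "G \<subseteq> Pow (space N)"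
    and space_G: "space N \<in> G"
    and f: "integrable N f" and g: "integrable N g"
    and eq_G: "\<And>A. A \<in> G \<Longrightarrow> (LINT x:A|N. f x) = (LINT x:A|N. g x)"
  shows "AE x in N. f x = g x"
proof (rule density_unique_real[OF f g])
  have set_int: "set_integrable N A f" "set_integrable N A g" if "A \<in> sets N" for A
    using integrable_mult_indicator[OF that f] integrable_mult_indicator[OF that g]
    by (simp_all add: set_integrable_def)
  fix E assume "E \<in> sets N"
  then have "E \<in> sigma_sets (space N) G" by (simp add: sets_N)
  with G show "(LINT x:E|N. f x) = (LINT x:E|N. g x)"
  proof (induction rule: sigma_sets_induct_disjoint)
    case (basic A)
    then show ?case by (rule eq_G)
  next
    case empty
    then show ?case by (simp add: set_lebesgue_integral_def)
  next
    case (compl A)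
    then have A: "A \<in> sets N" by (simp add: sets_N)
    have split: "(LINT x:space N|N. h x) = (LINT x:A|N. h x) + (LINT x:space N - A|N. h x)"
      if "set_integrable N (space N) h" for h :: "'a \<Rightarrow> real"
    proof -
      have "space N = A \<union> (space N - A)" using sets.sets_into_space[OF A] by blast
      then show ?thesis
        using that set_integrable_subset[OF that] A
        by (metis Diff_disjoint Diff_subset sets.Diff sets.sets_into_space sets.top set_integral_Un)
    qed
    show ?case
      using split[OF set_int(1)] split[OF set_int(2)] compl.IH eq_G[OF space_G] by simp
  next
    case (union A)
    have A: "A i \<in> sets N" for i using union.hyps(2) by (auto simp: sets_N)
    have "(LINT x:(\<Union>i. A i)|N. h x) = (\<Sum>i. LINT x:A i|N. h x)"
      if "set_integrable N (\<Union>i. A i) h" for h :: "'a \<Rightarrow> real"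
      using union.hyps(1) that A by (intro lebesgue_integral_countable_add) (auto simp: disjoint_family_on_def)
    then show ?case
      using set_int union.IH A by simp
  qed
qed

lemma integrable_mult_abs_le_1:
  fixes h k :: "'a \<Rightarrow> real"
  assumes "integrable N h" "k \<in> borel_measurable N" "\<And>x. \<bar>k x\<bar> \<le> 1"
  shows "integrable N (\<lambda>x. k x * h x)"
  using assms by (intro Bochner_Integration.integrable_bound[OF assms(1)])
    (auto simp: abs_mult intro!: mult_left_le_one_le)

text \<open>The conditional probability of \<open>A\<close> given \<open>F\<close>, truncated to \<open>[0, 1]\<close> so that it is bounded
  everywhere and not just almost everywhere.\<close>

definition cond_prob_weight :: "'a measure \<Rightarrow> 'a measure \<Rightarrow> 'a set \<Rightarrow> 'a \<Rightarrow> real" where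
  "cond_prob_weight M F A x = max 0 (min 1 (real_cond_exp M F (indicator A) x))"

lemma borel_measurable_cond_prob_weight[measurable]:
  "cond_prob_weight M F A \<in> borel_measurable F"
  unfolding cond_prob_weight_def by measurable

lemma abs_cond_prob_weight_mult_indicator_le_1: "\<bar>cond_prob_weight M F A x * indicator B y\<bar> \<le> 1"
  unfolding cond_prob_weight_def by (auto simp: indicator_def)

lemma (in finite_measure_subalgebra) AE_cond_prob_weight_eq:
  assumes "A \<in> sets M"
  shows "AE x in M. cond_prob_weight M F A x = real_cond_exp M F (indicator A) x"
proof -
  have int_A: "integrable M (indicator A :: 'a \<Rightarrow> real)" using assms by (simp add: emeasure_eq_measure)
  have "AE x in M. 0 \<le> real_cond_exp M F (indicator A) x" by (rule real_cond_exp_pos) (use assms in auto)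
  moreover have "AE x in M. real_cond_exp M F (indicator A) x \<le> 1"
    by (rule real_cond_exp_le_c[OF int_A]) (auto simp: indicator_def)
  ultimately show ?thesis by eventually_elim (simp add: cond_prob_weight_def)
qed

lemma (in finite_measure_subalgebra) integral_indicator_mult_eq_cond_prob_weight:
  assumes A: "A \<in> sets M" and \<phi>_int: "integrable M \<phi>" and \<phi>_meas: "\<phi> \<in> borel_measurable F"
  shows "(\<integral>x. indicator A x * \<phi> x \<partial>M) = (\<integral>x. cond_prob_weight M F A x * \<phi> x \<partial>M)"
proof -
  have [measurable]: "\<phi> \<in> borel_measurable M" "cond_prob_weight M F A \<in> borel_measurable M"
    using measurable_from_subalg[OF subalg] \<phi>_meas borel_measurable_cond_prob_weight by blast+
  have "(\<integral>x. indicator A x * \<phi> x \<partial>M) = (\<integral>x. \<phi> x * real_cond_exp M F (indicator A) x \<partial>M)"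
    using A \<phi>_int \<phi>_meas
    by (subst real_cond_exp_intg(2)) (auto simp: mult.commute intro: integrable_real_mult_indicator)
  also have "\<dots> = (\<integral>x. cond_prob_weight M F A x * \<phi> x \<partial>M)"
    using AE_cond_prob_weight_eq[OF A] by (intro integral_cong_AE) auto
  finally show ?thesis .
qed

lemma set_integral_rectangle_eq_weighted:
  fixes h :: "'a \<times> 'b \<Rightarrow> real"
  assumes "finite_measure M" "finite_measure M'" and sub: "subalgebra M M0"
    and A: "A \<in> sets M" and B[measurable]: "B \<in> sets M'"
    and h_int: "integrable (M \<Otimes>\<^sub>M M') h" and h_sec: "AE y in M'. (\<lambda>x. h (x, y)) \<in> borel_measurable M0"
  shows "(LINT z:A \<times> B|M \<Otimes>\<^sub>M M'. h z) =
    (\<integral>z. cond_prob_weight M M0 A (fst z) * indicator B (snd z) * h z \<partial>(M \<Otimes>\<^sub>M M'))"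
proof -
  interpret M: finite_measure M by fact
  interpret M': finite_measure M' by fact
  interpret P: pair_sigma_finite M M' ..
  interpret M0: finite_measure_subalgebra M M0 by unfold_locales (rule sub)
  define c where "c = cond_prob_weight M M0 A"
  have [measurable]: "c \<in> borel_measurable M" "h \<in> borel_measurable (M \<Otimes>\<^sub>M M')"
    using measurable_from_subalg[OF sub borel_measurable_cond_prob_weight] h_int by (simp_all add: c_def)
  have int_ABh: "integrable (M \<Otimes>\<^sub>M M') (\<lambda>z. indicator (A \<times> B) z * h z)"
    using integrable_mult_indicator[of "A \<times> B" _ h] A B h_int by simp
  have int_ch: "integrable (M \<Otimes>\<^sub>M M') (\<lambda>z. c (fst z) * indicator B (snd z) * h z)"
    by (intro integrable_mult_abs_le_1[OF h_int])
      (measurable, unfold c_def, rule abs_cond_prob_weight_mult_indicator_le_1)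
  have "AE y in M'. integrable M (\<lambda>x. h (x, y))"
    using P.AE_integrable_snd[of "\<lambda>x y. h (x, y)"] h_int by simp
  with h_sec have "AE y in M'. (\<integral>x. indicator (A \<times> B) (x, y) * h (x, y) \<partial>M) =
      (\<integral>x. c x * indicator B y * h (x, y) \<partial>M)"
  proof eventually_elim
    case (elim y)
    show ?case
    proof (cases "y \<in> B")
      case True
      have "(\<integral>x. indicator (A \<times> B) (x, y) * h (x, y) \<partial>M) = (\<integral>x. indicator A x * h (x, y) \<partial>M)"
        using True by (simp add: indicator_times)
      also have "\<dots> = (\<integral>x. c x * h (x, y) \<partial>M)"
        unfolding c_def using elim by (intro M0.integral_indicator_mult_eq_cond_prob_weight[OF A]) auto
      finally show ?thesis using True by simp
    qed simp
  qed
  then have "(\<integral>y. \<integral>x. indicator (A \<times> B) (x, y) * h (x, y) \<partial>M \<partial>M') =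
      (\<integral>y. \<integral>x. c x * indicator B y * h (x, y) \<partial>M \<partial>M')"
    using P.integrable_snd[of "\<lambda>x y. indicator (A \<times> B) (x, y) * h (x, y)"]
      P.integrable_snd[of "\<lambda>x y. c x * indicator B y * h (x, y)"] int_ABh int_ch
    by (intro integral_cong_AE) (simp_all add: case_prod_beta')
  then show ?thesis
    using P.integral_snd[of "\<lambda>x y. indicator (A \<times> B) (x, y) * h (x, y)"]
      P.integral_snd[of "\<lambda>x y. c x * indicator B y * h (x, y)"] int_ABh int_ch
    by (simp add: set_lebesgue_integral_def case_prod_beta' c_def)
qed

lemma AE_eq_real_cond_exp_pair_measure:
  fixes f :: "'a \<times> 'b \<Rightarrow> real"
  assumes M: "finite_measure M" and M': "finite_measure M'" and sub: "subalgebra M M0"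
    and f_int: "integrable (M \<Otimes>\<^sub>M M') f"
    and f_sec: "AE y in M'. (\<lambda>x. f (x, y)) \<in> borel_measurable M0"
  shows "AE z in M \<Otimes>\<^sub>M M'. f z = real_cond_exp (M \<Otimes>\<^sub>M M') (M0 \<Otimes>\<^sub>M M') f z"
proof -
  interpret finite_measure_subalgebra "M \<Otimes>\<^sub>M M'" "M0 \<Otimes>\<^sub>M M'"
    using finite_measure_pair_measure[OF M' M] subalgebra_pair_measure[OF sub]
    by (simp add: finite_measure_subalgebra_def finite_measure_subalgebra_axioms_def)
  have [measurable]: "f \<in> borel_measurable (M \<Otimes>\<^sub>M M')" using f_int by simp
  define g where "g = real_cond_exp (M \<Otimes>\<^sub>M M') (M0 \<Otimes>\<^sub>M M') f"
  have g_meas[measurable]: "g \<in> borel_measurable (M0 \<Otimes>\<^sub>M M')" unfolding g_def by simp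
  have g_int: "integrable (M \<Otimes>\<^sub>M M') g" unfolding g_def using f_int by (rule real_cond_exp_int)
  have g_sec: "AE y in M'. (\<lambda>x. g (x, y)) \<in> borel_measurable M0"
    by (intro AE_I2 measurable_Pair1[OF g_meas]) (simp add: space_pair_measure)
  have "AE z in M \<Otimes>\<^sub>M M'. f z = g z"
  proof (rule AE_eq_if_set_integral_eq_on_generator[OF _ Int_stable_pair_measure_generator _ _ f_int g_int])
    show "sets (M \<Otimes>\<^sub>M M') = sigma_sets (space (M \<Otimes>\<^sub>M M')) {a \<times> b |a b. a \<in> sets M \<and> b \<in> sets M'}"
      by (simp add: sets_pair_measure space_pair_measure)
    show "{a \<times> b |a b. a \<in> sets M \<and> b \<in> sets M'} \<subseteq> Pow (space (M \<Otimes>\<^sub>M M'))"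
      using pair_measure_closed by (simp add: space_pair_measure)
    show "space (M \<Otimes>\<^sub>M M') \<in> {a \<times> b |a b. a \<in> sets M \<and> b \<in> sets M'}"
      unfolding space_pair_measure using sets.top[of M] sets.top[of M'] by blast
    fix E assume "E \<in> {a \<times> b |a b. a \<in> sets M \<and> b \<in> sets M'}"
    then obtain A B where E: "E = A \<times> B" and A: "A \<in> sets M" and B[measurable]: "B \<in> sets M'" by blast
    define k where "k z = cond_prob_weight M M0 A (fst z) * indicator B (snd z)" for z
    have k_meas: "k \<in> borel_measurable (M0 \<Otimes>\<^sub>M M')" unfolding k_def by measurable
    have [measurable]: "k \<in> borel_measurable (M \<Otimes>\<^sub>M M')"
      by (rule measurable_from_subalg[OF subalgebra_pair_measure[OF sub] k_meas])
    have kf_int: "integrable (M \<Otimes>\<^sub>M M') (\<lambda>z. k z * f z)"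
      by (intro integrable_mult_abs_le_1[OF f_int])
        (measurable, unfold k_def, rule abs_cond_prob_weight_mult_indicator_le_1)
    have "(LINT z:E|M \<Otimes>\<^sub>M M'. f z) = (\<integral>z. k z * f z \<partial>(M \<Otimes>\<^sub>M M'))"
      unfolding E k_def by (rule set_integral_rectangle_eq_weighted[OF M M' sub A B f_int f_sec])
    also have "\<dots> = (\<integral>z. k z * g z \<partial>(M \<Otimes>\<^sub>M M'))"
      unfolding g_def using real_cond_exp_intg(2)[OF kf_int k_meas] by simp
    also have "\<dots> = (LINT z:E|M \<Otimes>\<^sub>M M'. g z)"
      unfolding E k_def by (rule set_integral_rectangle_eq_weighted[OF M M' sub A B g_int g_sec, symmetric])
    finally show "(LINT z:E|M \<Otimes>\<^sub>M M'. f z) = (LINT z:E|M \<Otimes>\<^sub>M M'. g z)" .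
  qed
  then show ?thesis unfolding g_def .
qed

lemma continuous_eq_if_eq_on_dense:
  fixes a b :: "'p::topological_space \<Rightarrow> 'q::t2_space"
  assumes "closure D = UNIV" "continuous_on UNIV a" "continuous_on UNIV b" "\<And>x. x \<in> D \<Longrightarrow> a x = b x"
  shows "a x = b x"
proof -
  have "closed {x. a x = b x}" using assms(2,3) by (intro closed_Collect_eq) auto
  then have "closure D \<subseteq> {x. a x = b x}" using assms(4) by (intro closure_minimal) auto
  then show ?thesis using assms(1) by auto
qed

lemma countable_dense_rational_subspace:
  obtains D :: "'p::{real_normed_vector, second_countable_topology} set"
  where "countable D" "closure D = UNIV" "\<And>x y. x \<in> D \<Longrightarrow> y \<in> D \<Longrightarrow> x + y \<in> D"
    "\<And>q x. x \<in> D \<Longrightarrow> of_rat q *\<^sub>R x \<in> D"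
proof -
  obtain E :: "'p set" where E: "countable E" "\<And>X. open X \<Longrightarrow> X \<noteq> {} \<Longrightarrow> \<exists>d\<in>E. d \<in> X"
    using countable_dense_exists by blast
  define comb :: "(rat \<times> 'p) list \<Rightarrow> 'p" where
    "comb l = (\<Sum>(q, e)\<leftarrow>l. of_rat q *\<^sub>R e)" for l
  define D where "D = comb ` lists (UNIV \<times> E)"
  have "countable D"
    unfolding D_def using E(1) by (intro countable_image countable_lists countable_SIGMA) auto
  moreover have "closure D = UNIV"
  proof -
    have "E \<subseteq> D"
    proof
      fix e assume "e \<in> E"
      then have "comb [(1, e)] \<in> D" unfolding D_def by (intro imageI) auto
      then show "e \<in> D" by (simp add: comb_def)
    qed
    moreover have "x \<in> closure E" for x
      unfolding closure_approachable
    proof (intro allI impI)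
      fix r :: real assume "r > 0"
      then obtain d where "d \<in> E" "d \<in> ball x r" using E(2)[of "ball x r"] by auto
      then show "\<exists>y\<in>E. dist y x < r" by (auto simp: dist_commute)
    qed
    ultimately show ?thesis using closure_mono by blast
  qed
  moreover have "x + y \<in> D" if xy: "x \<in> D" "y \<in> D" for x y
  proof -
    obtain l1 l2 where "l1 \<in> lists (UNIV \<times> E)" "l2 \<in> lists (UNIV \<times> E)" "x = comb l1" "y = comb l2"
      using xy unfolding D_def by auto
    then show ?thesis unfolding D_def by (intro image_eqI[of _ _ "l1 @ l2"]) (auto simp: comb_def)
  qed
  moreover have "of_rat q *\<^sub>R x \<in> D" if x: "x \<in> D" for q x
  proof -
    obtain l where l: "l \<in> lists (UNIV \<times> E)" "x = comb l" using x unfolding D_def by auto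
    have "comb (map (\<lambda>(q', e). (q * q', e)) l) = of_rat q *\<^sub>R comb l"
      by (induction l) (auto simp: comb_def of_rat_mult scaleR_add_right)
    moreover have "map (\<lambda>(q', e). (q * q', e)) l \<in> lists (UNIV \<times> E)" using l(1) by auto
    ultimately show ?thesis unfolding D_def l(2) by (metis image_eqI)
  qed
  ultimately show ?thesis using that by blast
qed

lemma blinfun_eqI_dense:
  fixes L1 L2 :: "'p::real_normed_vector \<Rightarrow>\<^sub>L real"
  assumes "closure D = UNIV" "\<And>x. x \<in> D \<Longrightarrow> L1 x = L2 x"
  shows "L1 = L2"
proof (rule blinfun_eqI)
  show "L1 x = L2 x" for x
    by (rule continuous_eq_if_eq_on_dense[OF assms(1) _ _ assms(2)]) (auto intro: linear_continuous_on blinfun.bounded_linear_right)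
qed

lemma ex_blinfun_extension_from_dense_rational_subspace:
  fixes u :: "'p::banach \<Rightarrow> real"
  assumes dense: "closure D = UNIV"
    and add_closed: "\<And>x y. x \<in> D \<Longrightarrow> y \<in> D \<Longrightarrow> x + y \<in> D"
    and scale_closed: "\<And>q x. x \<in> D \<Longrightarrow> of_rat q *\<^sub>R x \<in> D"
    and add: "\<And>x y. x \<in> D \<Longrightarrow> y \<in> D \<Longrightarrow> u (x + y) = u x + u y"
    and hom: "\<And>q x. x \<in> D \<Longrightarrow> u (of_rat q *\<^sub>R x) = of_rat q * u x"
    and bdd: "\<And>x. x \<in> D \<Longrightarrow> \<bar>u x\<bar> \<le> C * norm x" and "0 \<le> C"
  shows "\<exists>L::'p \<Rightarrow>\<^sub>L real. \<forall>x\<in>D. L x = u x"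
proof -
  have diff: "x - y \<in> D \<and> u (x - y) = u x - u y" if "x \<in> D" "y \<in> D" for x y
  proof -
    have neg: "- y \<in> D" "u (- y) = - u y"
      using scale_closed[OF that(2), of "-1"] hom[OF that(2), of "-1"] by (simp_all add: of_rat_minus)
    show ?thesis using add_closed[OF that(1) neg(1)] add[OF that(1) neg(1)] neg by simp
  qed
  have "C-lipschitz_on D u"
  proof (rule lipschitz_onI)
    show "dist (u x) (u y) \<le> C * dist x y" if "x \<in> D" "y \<in> D" for x y
      using diff[OF that] bdd[of "x - y"] by (simp add: dist_real_def dist_norm)
  qed fact
  then obtain g where g_lip: "C-lipschitz_on UNIV g" and g_D: "\<And>x. x \<in> D \<Longrightarrow> g x = u x"
    using lipschitz_extend_closure dense by metis
  have cont: "continuous_on S g" for S by (rule lipschitz_on_continuous_on[OF lipschitz_on_subset[OF g_lip]]) simp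
  have g_add: "g (x + y) = g x + g y" for x y
  proof -
    have "g (fst p + snd p) = g (fst p) + g (snd p)" for p
    proof (rule continuous_eq_if_eq_on_dense[of "D \<times> D"])
      show "closure (D \<times> D) = UNIV" using dense by (simp add: closure_Times)
      show "continuous_on UNIV (\<lambda>p. g (fst p + snd p))"
        by (intro continuous_on_compose2[OF cont] continuous_intros) auto
      show "continuous_on UNIV (\<lambda>p. g (fst p) + g (snd p))"
        by (intro continuous_intros continuous_on_compose2[OF cont]) auto
    qed (use add add_closed g_D in auto)
    from this[of "(x, y)"] show ?thesis by simp
  qed
  have g_rat: "g (of_rat q *\<^sub>R x) = of_rat q * g x" for q x
  proof (rule continuous_eq_if_eq_on_dense[OF dense, where a = "\<lambda>x. g (of_rat q *\<^sub>R x)"])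
    show "continuous_on UNIV (\<lambda>x. g (of_rat q *\<^sub>R x))"
      by (intro continuous_on_compose2[OF cont] continuous_intros) auto
    show "continuous_on UNIV (\<lambda>x. of_rat q * g x)" by (intro continuous_intros cont)
  qed (use hom scale_closed g_D in auto)
  have g_scale: "g (r *\<^sub>R x) = r * g x" for r x
  proof (rule continuous_eq_if_eq_on_dense[OF Rats_closure_real, where a = "\<lambda>r. g (r *\<^sub>R x)"])
    show "continuous_on UNIV (\<lambda>r. g (r *\<^sub>R x))"
      by (intro continuous_on_compose2[OF cont] continuous_intros) auto
    show "continuous_on UNIV (\<lambda>r. r * g x)" by (intro continuous_intros)
  qed (use g_rat in \<open>auto elim!: Rats_cases\<close>)
  have g_bound: "norm (g x) \<le> norm x * C" for x
    using lipschitz_onD[OF g_lip, of x 0] g_scale[of 0 0] by (simp add: dist_norm mult.commute)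
  have "bounded_linear g"
    by (rule bounded_linear_intro[of g C]) (use g_add g_scale g_bound in simp_all)
  then show ?thesis using g_D by (intro exI[of _ "Blinfun g"]) (simp add: bounded_linear_Blinfun_apply)
qed

lemma ex_blinfun_restriction_iff:
  fixes u :: "'p::banach \<Rightarrow> real"
  assumes dense: "closure D = UNIV"
    and add_closed: "\<And>x y. x \<in> D \<Longrightarrow> y \<in> D \<Longrightarrow> x + y \<in> D"
    and scale_closed: "\<And>q x. x \<in> D \<Longrightarrow> of_rat q *\<^sub>R x \<in> D"
  shows "(\<exists>L::'p \<Rightarrow>\<^sub>L real. \<forall>x\<in>D. L x = u x) \<longleftrightarrow>
    (\<forall>x\<in>D. \<forall>y\<in>D. u (x + y) = u x + u y) \<and> (\<forall>q. \<forall>x\<in>D. u (of_rat q *\<^sub>R x) = of_rat q * u x) \<and>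
    (\<exists>n::nat. \<forall>x\<in>D. \<bar>u x\<bar> \<le> real n * norm x)"
    (is "?ext \<longleftrightarrow> ?add \<and> ?hom \<and> ?bdd")
proof
  assume ?ext
  then obtain L :: "'p \<Rightarrow>\<^sub>L real" where L: "\<And>x. x \<in> D \<Longrightarrow> L x = u x" by blast
  have "\<bar>u x\<bar> \<le> real (nat \<lceil>norm L\<rceil>) * norm x" if "x \<in> D" for x
  proof -
    have "\<bar>u x\<bar> \<le> norm L * norm x" using norm_blinfun[of L x] L[OF that] by simp
    also have "\<dots> \<le> real (nat \<lceil>norm L\<rceil>) * norm x" by (intro mult_right_mono) (auto simp: real_nat_ceiling_ge)
    finally show ?thesis .
  qed
  moreover have "u (x + y) = u x + u y" if "x \<in> D" "y \<in> D" for x y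
    using L[of "x + y"] L[of x] L[of y] add_closed[OF that] that by (simp add: blinfun.add_right)
  moreover have "u (of_rat q *\<^sub>R x) = of_rat q * u x" if "x \<in> D" for q x
    using L[of "of_rat q *\<^sub>R x"] L[of x] scale_closed[OF that] that by (simp add: blinfun.scaleR_right)
  ultimately show "?add \<and> ?hom \<and> ?bdd" by blast
next
  assume "?add \<and> ?hom \<and> ?bdd"
  then obtain n :: nat where "?add" "?hom" "\<And>x. x \<in> D \<Longrightarrow> \<bar>u x\<bar> \<le> real n * norm x" by blast
  then show ?ext by (intro ex_blinfun_extension_from_dense_rational_subspace[OF assms, of u "real n"]) auto
qed

lemma weak_star_measurable_version:
  fixes W :: "'x \<Rightarrow> ('p::{banach, second_countable_topology} \<Rightarrow>\<^sub>L real)"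
  assumes g_meas: "\<And>\<phi>. g \<phi> \<in> borel_measurable F"
    and W_AE_g: "\<And>\<phi>. AE x in N. W x \<phi> = g \<phi> x"
  obtains W' where "weak_star_measurable F W'" "AE x in N. W x = W' x"
proof -
  obtain D :: "'p set" where D: "countable D" "closure D = UNIV"
    "\<And>x y. x \<in> D \<Longrightarrow> y \<in> D \<Longrightarrow> x + y \<in> D" "\<And>q x. x \<in> D \<Longrightarrow> of_rat q *\<^sub>R x \<in> D"
    using countable_dense_rational_subspace by blast
  define extends where "extends x \<longleftrightarrow> (\<exists>L::'p \<Rightarrow>\<^sub>L real. \<forall>\<phi>\<in>D. L \<phi> = g \<phi> x)" for x
  define W' :: "'x \<Rightarrow> 'p \<Rightarrow>\<^sub>L real"
    where "W' x = (if extends x then SOME L::'p \<Rightarrow>\<^sub>L real. \<forall>\<phi>\<in>D. L \<phi> = g \<phi> x else 0)" for x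
  have W'_D: "W' x \<phi> = g \<phi> x" if "extends x" "\<phi> \<in> D" for x \<phi>
    using someI_ex[OF that(1)[unfolded extends_def]] that unfolding W'_def by auto
  have extends_iff: "extends x \<longleftrightarrow>
      (\<forall>\<phi>\<in>D. \<forall>\<psi>\<in>D. g (\<phi> + \<psi>) x = g \<phi> x + g \<psi> x) \<and>
      (\<forall>q. \<forall>\<phi>\<in>D. g (of_rat q *\<^sub>R \<phi>) x = of_rat q * g \<phi> x) \<and>
      (\<exists>n::nat. \<forall>\<phi>\<in>D. \<bar>g \<phi> x\<bar> \<le> real n * norm \<phi>)" for x
    unfolding extends_def by (rule ex_blinfun_restriction_iff[OF D(2-4)])
  have extends_pred: "Measurable.pred F extends"
    unfolding extends_iff using D(1) g_meas by measurable
  have "(\<lambda>x. W' x \<psi>) \<in> borel_measurable F" for \<psi>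
  proof -
    obtain s where s: "\<And>n. s n \<in> D" "s \<longlonglongrightarrow> \<psi>"
      using D(2) closure_sequential[of \<psi> D] by auto
    show ?thesis
    proof (rule borel_measurable_LIMSEQ_real[where u="\<lambda>n x. if extends x then g (s n) x else 0"])
      fix x
      have "(\<lambda>n. W' x (s n)) \<longlonglongrightarrow> W' x \<psi>" using s(2) by (intro tendsto_intros)
      moreover have "W' x (s n) = (if extends x then g (s n) x else 0)" for n
        using W'_D s(1) by (simp add: W'_def)
      ultimately show "(\<lambda>n. if extends x then g (s n) x else 0) \<longlonglongrightarrow> W' x \<psi>" by simp
    qed (use extends_pred g_meas in measurable)
  qed
  then have "weak_star_measurable F W'" unfolding weak_star_measurable_def by blast
  moreover have "AE x in N. W x = W' x"
  proof -
    have "AE x in N. \<forall>\<phi>\<in>D. W x \<phi> = g \<phi> x" using W_AE_g D(1) by (simp add: AE_ball_countable)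
    then show ?thesis
    proof eventually_elim
      case (elim x)
      then have "extends x" unfolding extends_def by blast
      with elim show "W x = W' x" by (intro blinfun_eqI_dense[OF D(2)]) (simp add: W'_D)
    qed
  qed
  ultimately show ?thesis by (rule that)
qed

lemma (in finite_measure) integrable_blinfun_apply_of_square_integrable:
  fixes W :: "'a \<Rightarrow> ('p::real_normed_vector \<Rightarrow>\<^sub>L real)"
  assumes "weak_star_measurable M W" and "integrable M (\<lambda>x. (norm (W x))\<^sup>2)"
  shows "integrable M (\<lambda>x. W x \<phi>)"
proof (rule Bochner_Integration.integrable_bound)
  have "(\<lambda>x. sqrt ((norm (W x))\<^sup>2)) \<in> borel_measurable M" using assms(2) by measurable
  then have "(\<lambda>x. norm (W x)) \<in> borel_measurable M" by simp
  then have "integrable M (\<lambda>x. norm (W x))" using assms(2) by (rule square_integrable_imp_integrable)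
  then show "integrable M (\<lambda>x. norm (W x) * norm \<phi>)" by simp
  show "(\<lambda>x. W x \<phi>) \<in> borel_measurable M" using assms(1) unfolding weak_star_measurable_def by blast
  show "AE x in M. norm (W x \<phi>) \<le> norm (norm (W x) * norm \<phi>)"
    by (intro AE_I2) (metis norm_blinfun real_norm_def abs_mult abs_norm_cancel)
qed

lemma is_weak_star_cond_exp_of_AE_eq:
  assumes sub: "subalgebra N F" and W'_meas: "weak_star_measurable F W'"
    and W_AE_W': "AE x in N. W x = W' x" and W_int: "\<And>\<phi>. integrable N (\<lambda>x. W x \<phi>)"
  shows "is_weak_star_cond_exp N F W W'"
  unfolding is_weak_star_cond_exp_def
proof (intro conjI ballI allI W'_meas)
  fix B \<phi> assume "B \<in> sets F"
  then have B: "B \<in> sets N" using sub unfolding subalgebra_def by auto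
  have W'_meas_N: "(\<lambda>x. W' x \<phi>) \<in> borel_measurable N"
    using W'_meas measurable_from_subalg[OF sub] unfolding weak_star_measurable_def by blast
  then have W'_int: "integrable N (\<lambda>x. W' x \<phi>)"
    using W_AE_W' by (intro integrable_cong_AE_imp[OF W_int[of \<phi>]]) auto
  show "set_integrable N B (\<lambda>x. W' x \<phi>)"
    unfolding set_integrable_def by (rule integrable_mult_indicator[OF B W'_int])
  show "set_integrable N B (\<lambda>x. W x \<phi>)"
    unfolding set_integrable_def by (rule integrable_mult_indicator[OF B W_int])
  show "(LINT x:B|N. W' x \<phi>) = (LINT x:B|N. W x \<phi>)"
    using W_AE_W' B W'_meas_N borel_measurable_integrable[OF W_int]
    by (intro set_lebesgue_integral_cong_AE) auto
qed

theorem mainTheorem9: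
  fixes M :: "'a measure" and M' :: "'b measure" and M0 :: "'a measure"
    and W :: "'a \<times> 'b \<Rightarrow> ('phi::{banach, second_countable_topology} \<Rightarrow>\<^sub>L real)"
  assumes "prob_space M" and "prob_space M'"
    and "weak_star_measurable (M \<Otimes>\<^sub>M M') W"
    and "integrable (M \<Otimes>\<^sub>M M') (\<lambda>x. (norm (W x))\<^sup>2)"
    and "subalgebra M M0"
    and "AE y in M'. weak_star_measurable M0 (\<lambda>x. W (x, y))"
  shows "almost_weak_star_measurable (M \<Otimes>\<^sub>M M') (M0 \<Otimes>\<^sub>M M') W"
proof -
  have M: "finite_measure M" and M': "finite_measure M'"
    using assms(1,2) by (simp_all add: prob_space_def)
  interpret finite_measure "M \<Otimes>\<^sub>M M'" using finite_measure_pair_measure[OF M' M] .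
  have W_int: "integrable (M \<Otimes>\<^sub>M M') (\<lambda>z. W z \<phi>)" for \<phi>
    using assms(3,4) by (rule integrable_blinfun_apply_of_square_integrable)
  have W_AE_cond_exp:
    "AE z in M \<Otimes>\<^sub>M M'. W z \<phi> = real_cond_exp (M \<Otimes>\<^sub>M M') (M0 \<Otimes>\<^sub>M M') (\<lambda>z. W z \<phi>) z" for \<phi>
    using assms(6) unfolding weak_star_measurable_def
    by (intro AE_eq_real_cond_exp_pair_measure[OF M M' assms(5) W_int]) auto
  obtain W' where "weak_star_measurable (M0 \<Otimes>\<^sub>M M') W'" "AE z in M \<Otimes>\<^sub>M M'. W z = W' z"
    using weak_star_measurable_version[OF borel_measurable_cond_exp W_AE_cond_exp] by blast
  then show ?thesis
    unfolding almost_weak_star_measurable_def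
    using is_weak_star_cond_exp_of_AE_eq[OF subalgebra_pair_measure[OF assms(5)] _ _ W_int] by blast
qed

end
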